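(* Let $\mathfrak p\in\mathcal F^*$ and let $N$ be an $R$-module with $\mathfrak pN=0$. Then: (a) $N$ is $\mathcal F$-torsion-free if and only if $N$ is torsion-free as a module over the domain $R/\mathfrak p$; (b) $N$ is $\mathcal F$-divisible if and only if $N$ is divisible as a module over the domain $R/\mathfrak p$.
   Context: Throughout, $R$ is a commutative Noetherian local ring and $\mathcal F$ is a Gabriel topology on $R$: a nonempty set of ideals of $R$ such that (1) if $\mathfrak a\in\mathcal F$ and $\mathfrak a\subseteq\mathfrak b$ then $\mathfrak b\in\mathcal F$; (2) if $\mathfrak a,\mathfrak b\in\mathcal F$ then $\mathfrak a\cap\mathfrak b\in\mathcal F$; (3) if $\mathfrak b$ is an ideal and there is $\mathfrak a\in\mathcal F$ with $(\mathfrak b:r)\in\mathcal F$ for all $r\in\mathfrak a$, then $\mathfrak b\in\mathcal F$. For an $R$-module $X$ and ideal $\mathfrak a$, $X[\mathfrak a]=\{x\in X:\mathfrak a x=0\}$. $X$ is $\mathcal F$-torsion-free if $X[\mathfrak a]=0$ for all $\mathfrak a\in\mathcal F$, and $\mathcal F$-divisible if $\mathfrak aX=X$ for all $\mathfrak a\in\mathcal F$. $\mathcal F^*$ denotes the set of maximal elements (under inclusion) of $\mathrm{Spec}(R)\setminus\mathcal F$. Over a domain $D$, a module $X$ is torsion-free if no nonzero element of $D$ annihilates a nonzero element of $X$, and divisible if $dX=X$ for all $0\ne d\in D$. *)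

theory Defs
  imports Complex_Main
begin

definition is_ideal :: "'a::comm_ring_1 set \<Rightarrow> bool" where
  "is_ideal I \<longleftrightarrow> 0 \<in> I \<and> (\<forall>x\<in>I. \<forall>y\<in>I. x + y \<in> I) \<and> (\<forall>r. \<forall>x\<in>I. r * x \<in> I)"

definition prime_ideal :: "'a::comm_ring_1 set \<Rightarrow> bool" where
  "prime_ideal P \<longleftrightarrow> is_ideal P \<and> P \<noteq> UNIV \<and> (\<forall>a b. a * b \<in> P \<longrightarrow> a \<in> P \<or> b \<in> P)"

definition maximal_ideal :: "'a::comm_ring_1 set \<Rightarrow> bool" where
  "maximal_ideal M \<longleftrightarrow> is_ideal M \<and> M \<noteq> UNIV \<and>
     (\<forall>J. is_ideal J \<and> M \<subseteq> J \<longrightarrow> J = M \<or> J = UNIV)"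

definition noetherian_ring :: "'a::comm_ring_1 itself \<Rightarrow> bool" where
  "noetherian_ring _ \<longleftrightarrow> (\<forall>f :: nat \<Rightarrow> 'a set. (\<forall>n. is_ideal (f n)) \<and> (\<forall>n. f n \<subseteq> f (Suc n))
        \<longrightarrow> (\<exists>n. \<forall>m\<ge>n. f m = f n))"

definition local_ring :: "'a::comm_ring_1 itself \<Rightarrow> bool" where
  "local_ring _ \<longleftrightarrow> (\<exists>!M :: 'a set. maximal_ideal M)"

definition colon_ideal :: "'a::comm_ring_1 set \<Rightarrow> 'a \<Rightarrow> 'a set" where
  "colon_ideal B r = {s. s * r \<in> B}"

definition gabriel_topology :: "'a::comm_ring_1 set set \<Rightarrow> bool" where
  "gabriel_topology F \<longleftrightarrow> F \<noteq> {} \<and> (\<forall>A\<in>F. is_ideal A) \<and>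
     (\<forall>A B. A \<in> F \<and> is_ideal B \<and> A \<subseteq> B \<longrightarrow> B \<in> F) \<and>
     (\<forall>A\<in>F. \<forall>B\<in>F. A \<inter> B \<in> F) \<and>
     (\<forall>B. is_ideal B \<and> (\<exists>A\<in>F. \<forall>r\<in>A. colon_ideal B r \<in> F) \<longrightarrow> B \<in> F)"

definition F_star :: "'a::comm_ring_1 set set \<Rightarrow> 'a set set" where
  "F_star F = {P. prime_ideal P \<and> P \<notin> F \<and>
      (\<forall>Q. prime_ideal Q \<and> Q \<notin> F \<and> P \<subseteq> Q \<longrightarrow> Q = P)}"

definition ann_sub :: "('a \<Rightarrow> 'b \<Rightarrow> 'b::ab_group_add) \<Rightarrow> 'a set \<Rightarrow> 'b set" where
  "ann_sub scale A = {x. \<forall>r\<in>A. scale r x = 0}"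

definition ideal_times :: "('a::comm_ring_1 \<Rightarrow> 'b \<Rightarrow> 'b::ab_group_add) \<Rightarrow> 'a set \<Rightarrow> 'b set" where
  "ideal_times scale A = module.span scale {scale r x | r x. r \<in> A}"

definition F_torsion_free :: "('a::comm_ring_1 \<Rightarrow> 'b \<Rightarrow> 'b::ab_group_add) \<Rightarrow> 'a set set \<Rightarrow> bool" where
  "F_torsion_free scale F \<longleftrightarrow> (\<forall>A\<in>F. ann_sub scale A = {0})"

definition F_divisible :: "('a::comm_ring_1 \<Rightarrow> 'b \<Rightarrow> 'b::ab_group_add) \<Rightarrow> 'a set set \<Rightarrow> bool" where
  "F_divisible scale F \<longleftrightarrow> (\<forall>A\<in>F. ideal_times scale A = UNIV)"

text \<open>For N with P N = 0, the R/P-module structure is (r + P) x = r x; the nonzero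
  elements of R/P are the classes of r not in P.\<close>
definition torsion_free_mod :: "('a::comm_ring_1 \<Rightarrow> 'b \<Rightarrow> 'b::ab_group_add) \<Rightarrow> 'a set \<Rightarrow> bool" where
  "torsion_free_mod scale P \<longleftrightarrow> (\<forall>d. d \<notin> P \<longrightarrow> (\<forall>x. scale d x = 0 \<longrightarrow> x = 0))"

definition divisible_mod :: "('a::comm_ring_1 \<Rightarrow> 'b \<Rightarrow> 'b::ab_group_add) \<Rightarrow> 'a set \<Rightarrow> bool" where
  "divisible_mod scale P \<longleftrightarrow> (\<forall>d. d \<notin> P \<longrightarrow> range (scale d) = UNIV)"

end

theory Submission
  imports Defs
begin

text \<open>Let \<open>P \<in> F\<^sup>*\<close> and \<open>d \<notin> P\<close>. The ideal \<open>P + Rd\<close> lies in \<open>F\<close>: otherwise, by the ascending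
  chain condition, it sits inside an ideal \<open>M\<close> maximal among the ideals outside \<open>F\<close>, and such
  an \<open>M\<close> is prime (if \<open>ab \<in> M\<close> with \<open>a, b \<notin> M\<close>, then \<open>M + Ra\<close> and \<open>(M : a)\<close> lie in \<open>F\<close>, and the
  colon axiom forces \<open>M \<in> F\<close>), contradicting the maximality of \<open>P\<close> in \<open>F\<^sup>*\<close>. Conversely every
  \<open>A \<in> F\<close> contains some \<open>d \<notin> P\<close>, because \<open>F\<close> is closed upwards and \<open>P \<notin> F\<close>. Since \<open>PN = 0\<close>,
  every \<open>r = p + sd \<in> P + Rd\<close> acts on \<open>N\<close> as \<open>s\<close> times \<open>d\<close>, so \<open>N[P + Rd] = N[d]\<close> and
  \<open>(P + Rd)N = dN\<close>; both equivalences follow.\<close>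

definition ideal_adjoin :: "'a::comm_ring_1 set \<Rightarrow> 'a \<Rightarrow> 'a set" where
  "ideal_adjoin I a = {p + s * a | p s. p \<in> I}"

lemma is_ideal_ideal_adjoin:
  assumes "is_ideal I"
  shows "is_ideal (ideal_adjoin I a)"
  unfolding is_ideal_def
proof (intro conjI ballI allI)
  have "0 = 0 + 0 * a" by simp
  then show "0 \<in> ideal_adjoin I a"
    using assms unfolding ideal_adjoin_def is_ideal_def by blast
next
  fix x y assume "x \<in> ideal_adjoin I a" "y \<in> ideal_adjoin I a"
  then obtain p s q t where "x = p + s * a" "y = q + t * a" "p \<in> I" "q \<in> I"
    unfolding ideal_adjoin_def by blast
  moreover from this have "x + y = (p + q) + (s + t) * a"
    by (simp add: algebra_simps)
  ultimately show "x + y \<in> ideal_adjoin I a"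
    using assms unfolding ideal_adjoin_def is_ideal_def by blast
next
  fix r x assume "x \<in> ideal_adjoin I a"
  then obtain p s where "x = p + s * a" "p \<in> I"
    unfolding ideal_adjoin_def by blast
  moreover from this have "r * x = r * p + (r * s) * a"
    by (simp add: algebra_simps)
  ultimately show "r * x \<in> ideal_adjoin I a"
    using assms unfolding ideal_adjoin_def is_ideal_def by blast
qed

lemma subset_ideal_adjoin: "I \<subseteq> ideal_adjoin I a"
proof
  fix x assume "x \<in> I"
  moreover have "x = x + 0 * a" by simp
  ultimately show "x \<in> ideal_adjoin I a"
    unfolding ideal_adjoin_def by blast
qed

lemma mem_ideal_adjoin:
  assumes "is_ideal I"
  shows "a \<in> ideal_adjoin I a"
proof -
  have "a = 0 + 1 * a" by simp
  then show ?thesis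
    using assms unfolding ideal_adjoin_def is_ideal_def by blast
qed

lemma is_ideal_colon_ideal:
  assumes "is_ideal B"
  shows "is_ideal (colon_ideal B r)"
  using assms unfolding is_ideal_def colon_ideal_def
  by (simp add: distrib_right mult.assoc)

lemma colon_ideal_ideal_adjoin:
  assumes "is_ideal I" and "r \<in> ideal_adjoin I a"
  shows "colon_ideal I a \<subseteq> colon_ideal I r"
proof
  fix t assume "t \<in> colon_ideal I a"
  then have ta: "t * a \<in> I" unfolding colon_ideal_def by simp
  obtain p s where r: "r = p + s * a" "p \<in> I"
    using assms(2) unfolding ideal_adjoin_def by blast
  then have "t * r = t * p + s * (t * a)"
    by (simp add: algebra_simps)
  moreover have "t * p \<in> I" "s * (t * a) \<in> I"
    using assms(1) r(2) ta unfolding is_ideal_def by auto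
  ultimately show "t \<in> colon_ideal I r"
    using assms(1) unfolding is_ideal_def colon_ideal_def by simp
qed

lemma gabriel_topology_mono:
  "gabriel_topology F \<Longrightarrow> A \<in> F \<Longrightarrow> is_ideal B \<Longrightarrow> A \<subseteq> B \<Longrightarrow> B \<in> F"
  unfolding gabriel_topology_def by blast

lemma gabriel_topology_colonI:
  "gabriel_topology F \<Longrightarrow> is_ideal B \<Longrightarrow> A \<in> F \<Longrightarrow>
    (\<And>r. r \<in> A \<Longrightarrow> colon_ideal B r \<in> F) \<Longrightarrow> B \<in> F"
  unfolding gabriel_topology_def by (elim conjE) blast

lemma UNIV_in_gabriel_topology:
  assumes "gabriel_topology F"
  shows "UNIV \<in> F"
proof -
  have "F \<noteq> {}"
    using assms unfolding gabriel_topology_def by (elim conjE)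
  then obtain A where "A \<in> F"
    by blast
  moreover have "is_ideal UNIV" unfolding is_ideal_def by simp
  ultimately show ?thesis
    using gabriel_topology_mono[OF assms] by blast
qed

lemma noetherian_ring_maximal_ideal_in:
  assumes "noetherian_ring TYPE('a::comm_ring_1)"
    and "B \<in> S" and S: "\<forall>J\<in>S. is_ideal (J :: 'a set)"
  shows "\<exists>M\<in>S. \<forall>J\<in>S. \<not> M \<subset> J"
proof (rule ccontr)
  assume "\<not> ?thesis"
  then have "\<exists>J'. J' \<in> S \<and> J \<subset> J'" if "J \<in> S" for J
    using that by blast
  then have "\<exists>f. \<forall>n. f n \<in> S \<and> f n \<subset> f (Suc n)"
    using \<open>B \<in> S\<close>
    by (intro dependent_nat_choice[where P = "\<lambda>_ J. J \<in> S" and Q = "\<lambda>_ J J'. J \<subset> J'"]) auto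
  then obtain f where f: "\<And>n. f n \<in> S" "\<And>n. f n \<subset> f (Suc n)"
    by blast
  have "(\<forall>n. is_ideal (f n)) \<and> (\<forall>n. f n \<subseteq> f (Suc n))"
    using f S by blast
  moreover have "(\<forall>n. is_ideal (f n)) \<and> (\<forall>n. f n \<subseteq> f (Suc n)) \<longrightarrow> (\<exists>n. \<forall>m\<ge>n. f m = f n)"
    using assms(1) unfolding noetherian_ring_def by (rule spec)
  ultimately obtain n where "\<forall>m\<ge>n. f m = f n"
    by blast
  then have "f (Suc n) = f n"
    using le_SucI by blast
  with f(2)[of n] show False by simp
qed

lemma prime_ideal_if_maximal_not_in_gabriel_topology:
  assumes G: "gabriel_topology F"
    and M: "is_ideal M" "M \<notin> F"
    and above: "\<And>J. is_ideal J \<Longrightarrow> M \<subset> J \<Longrightarrow> J \<in> F"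
  shows "prime_ideal M"
proof -
  have "a \<in> M \<or> b \<in> M" if ab: "a * b \<in> M" for a b
  proof (rule ccontr)
    assume nab: "\<not> (a \<in> M \<or> b \<in> M)"
    have adjoin: "ideal_adjoin M a \<in> F"
      using above[OF is_ideal_ideal_adjoin[OF M(1)]] subset_ideal_adjoin[of M a]
        mem_ideal_adjoin[OF M(1)] nab by blast
    have "M \<subseteq> colon_ideal M a"
    proof
      fix x assume "x \<in> M"
      then have "a * x \<in> M"
        using M(1) unfolding is_ideal_def by blast
      then show "x \<in> colon_ideal M a"
        unfolding colon_ideal_def by (simp add: mult.commute)
    qed
    moreover have "b \<in> colon_ideal M a"
      using ab unfolding colon_ideal_def by (simp add: mult.commute)
    ultimately have colon: "colon_ideal M a \<in> F"
      using above[OF is_ideal_colon_ideal[OF M(1)]] nab by blast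
    have "colon_ideal M r \<in> F" if "r \<in> ideal_adjoin M a" for r
      using gabriel_topology_mono[OF G colon is_ideal_colon_ideal[OF M(1)]]
        colon_ideal_ideal_adjoin[OF M(1) that] .
    then have "M \<in> F"
      using gabriel_topology_colonI[OF G M(1) adjoin] by blast
    with M(2) show False ..
  qed
  moreover have "M \<noteq> UNIV"
    using UNIV_in_gabriel_topology[OF G] M(2) by blast
  ultimately show ?thesis
    using M(1) unfolding prime_ideal_def by blast
qed

lemma prime_ideal_not_in_gabriel_topology_above:
  assumes "noetherian_ring TYPE('a::comm_ring_1)"
    and G: "gabriel_topology F"
    and B: "is_ideal (B :: 'a set)" "B \<notin> F"
  shows "\<exists>Q. prime_ideal Q \<and> Q \<notin> F \<and> B \<subseteq> Q"
proof -
  define S where "S = {J. is_ideal J \<and> B \<subseteq> J \<and> J \<notin> F}"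
  obtain M where "M \<in> S" and max: "\<forall>J\<in>S. \<not> M \<subset> J"
    using noetherian_ring_maximal_ideal_in[OF assms(1), of B S] B
    unfolding S_def by blast
  then have M: "is_ideal M" "B \<subseteq> M" "M \<notin> F"
    unfolding S_def by auto
  have "prime_ideal M"
  proof (rule prime_ideal_if_maximal_not_in_gabriel_topology[OF G M(1,3)])
    show "J \<in> F" if "is_ideal J" "M \<subset> J" for J
      using max M(2) that unfolding S_def by blast
  qed
  with M show ?thesis by blast
qed

lemma F_star_ideal_adjoin_in:
  assumes "noetherian_ring TYPE('a::comm_ring_1)"
    and G: "gabriel_topology F" and P: "P \<in> F_star F" and "(d :: 'a) \<notin> P"
  shows "ideal_adjoin P d \<in> F"
proof (rule ccontr)
  assume "ideal_adjoin P d \<notin> F"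
  moreover have P_ideal: "is_ideal P"
    using P unfolding F_star_def prime_ideal_def by blast
  ultimately obtain Q where Q: "prime_ideal Q" "Q \<notin> F" "ideal_adjoin P d \<subseteq> Q"
    using prime_ideal_not_in_gabriel_topology_above[OF assms(1) G is_ideal_ideal_adjoin]
    by blast
  then have "Q = P"
    using P subset_ideal_adjoin[of P d] unfolding F_star_def by blast
  with Q(3) mem_ideal_adjoin[OF P_ideal] \<open>d \<notin> P\<close> show False by blast
qed

lemma F_star_not_subset:
  assumes G: "gabriel_topology F" and P: "P \<in> F_star F" and "A \<in> F"
  shows "\<not> A \<subseteq> P"
  using gabriel_topology_mono[OF G \<open>A \<in> F\<close>, of P] P
  unfolding F_star_def prime_ideal_def by blast

lemma (in module) scale_ideal_adjoin:
  assumes "\<forall>p\<in>P. \<forall>x. scale p x = 0" and "r \<in> ideal_adjoin P d"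
  shows "\<exists>s. scale r x = scale d (scale s x)"
proof -
  obtain p s where "r = p + s * d" "p \<in> P"
    using assms(2) unfolding ideal_adjoin_def by blast
  then have "scale r x = scale d (scale s x)"
    using assms(1) by (simp add: scale_left_distrib mult.commute)
  then show ?thesis ..
qed

lemma (in module) torsion_free_mod_if_F_torsion_free:
  assumes "\<forall>p\<in>P. \<forall>x. scale p x = 0"
    and adjoin: "\<And>d. d \<notin> P \<Longrightarrow> ideal_adjoin P d \<in> F"
    and "F_torsion_free scale F"
  shows "torsion_free_mod scale P"
  unfolding torsion_free_mod_def
proof (intro allI impI)
  fix d x assume "d \<notin> P" and dx: "scale d x = 0"
  have "scale r x = 0" if r: "r \<in> ideal_adjoin P d" for r
  proof -
    obtain s where "scale r x = scale d (scale s x)"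
      using scale_ideal_adjoin[OF assms(1) r] by blast
    also have "\<dots> = scale s (scale d x)"
      by (rule scale_left_commute)
    finally show ?thesis
      using dx by simp
  qed
  then have "x \<in> ann_sub scale (ideal_adjoin P d)"
    unfolding ann_sub_def by blast
  then show "x = 0"
    using assms(3) adjoin[OF \<open>d \<notin> P\<close>] unfolding F_torsion_free_def by blast
qed

lemma (in module) F_torsion_free_if_torsion_free_mod:
  assumes "\<And>A. A \<in> F \<Longrightarrow> \<not> A \<subseteq> P"
    and "torsion_free_mod scale P"
  shows "F_torsion_free scale F"
  unfolding F_torsion_free_def
proof
  fix A assume "A \<in> F"
  then obtain d where "d \<in> A" "d \<notin> P"
    using assms(1) by blast
  then have "ann_sub scale A \<subseteq> {0}"
    using assms(2) unfolding ann_sub_def torsion_free_mod_def by blast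
  then show "ann_sub scale A = {0}"
    unfolding ann_sub_def by auto
qed

lemma (in module) divisible_mod_if_F_divisible:
  assumes "\<forall>p\<in>P. \<forall>x. scale p x = 0"
    and adjoin: "\<And>d. d \<notin> P \<Longrightarrow> ideal_adjoin P d \<in> F"
    and "F_divisible scale F"
  shows "divisible_mod scale P"
  unfolding divisible_mod_def
proof (intro allI impI)
  fix d assume "d \<notin> P"
  have "subspace (range (scale d))"
    by (rule module_hom.subspace_image[OF module_hom_scale_self subspace_UNIV])
  moreover have "{scale r x | r x. r \<in> ideal_adjoin P d} \<subseteq> range (scale d)"
    using scale_ideal_adjoin[OF assms(1)] by blast
  ultimately have "ideal_times scale (ideal_adjoin P d) \<subseteq> range (scale d)"
    unfolding ideal_times_def by (rule span_minimal[rotated])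
  then show "range (scale d) = UNIV"
    using assms(3) adjoin[OF \<open>d \<notin> P\<close>] unfolding F_divisible_def by blast
qed

lemma (in module) F_divisible_if_divisible_mod:
  assumes "\<And>A. A \<in> F \<Longrightarrow> \<not> A \<subseteq> P"
    and "divisible_mod scale P"
  shows "F_divisible scale F"
  unfolding F_divisible_def
proof
  fix A assume "A \<in> F"
  then obtain d where "d \<in> A" "d \<notin> P"
    using assms(1) by blast
  have "y \<in> {scale r x | r x. r \<in> A}" for y
    using assms(2) \<open>d \<in> A\<close> \<open>d \<notin> P\<close> unfolding divisible_mod_def by blast
  then show "ideal_times scale A = UNIV"
    unfolding ideal_times_def using span_base by blast
qed

theorem lemma1p2:
  fixes F :: "'a::comm_ring_1 set set"
    and P :: "'a set"
    and scale :: "'a \<Rightarrow> 'b \<Rightarrow> 'b::ab_group_add"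
  assumes "noetherian_ring TYPE('a)"
    and "local_ring TYPE('a)"
    and "gabriel_topology F"
    and "P \<in> F_star F"
    and "module scale"
    and "\<forall>r\<in>P. \<forall>x. scale r x = 0"
  shows "(F_torsion_free scale F \<longleftrightarrow> torsion_free_mod scale P)
       \<and> (F_divisible scale F \<longleftrightarrow> divisible_mod scale P)"
proof -
  have adjoin: "\<And>d. d \<notin> P \<Longrightarrow> ideal_adjoin P d \<in> F"
    using F_star_ideal_adjoin_in[OF assms(1,3,4)] .
  have not_subset: "\<And>A. A \<in> F \<Longrightarrow> \<not> A \<subseteq> P"
    using F_star_not_subset[OF assms(3,4)] .
  show ?thesis
    using module.torsion_free_mod_if_F_torsion_free[OF assms(5,6) adjoin]
      module.F_torsion_free_if_torsion_free_mod[OF assms(5) not_subset]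
      module.divisible_mod_if_F_divisible[OF assms(5,6) adjoin]
      module.F_divisible_if_divisible_mod[OF assms(5) not_subset]
    by blast
qed

end
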